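(* Let $p$ be a prime, $n\ge 1$, and $a_1,\ldots,a_n\in\mathbb{Q}_p$ with $|a_1|>p$ and $|a_1|>|j a_j|$ for all $2\le j\le n$. Then $$\int_{|x|\le 1}\chi(a_1x+\dots+a_nx^n)\,dx=0.$$
   Context: $|\cdot|$ denotes the $p$-adic absolute value on $\mathbb{Q}_p$; for an integer $j$, $|j|$ means its $p$-adic absolute value. Every nonzero $x\in\mathbb{Q}_p$ has a unique standard expansion $x=\sum_{j=k}^\infty x_jp^j$ with $x_j\in\{0,\ldots,p-1\}$, $x_k\neq 0$, $|x|=p^{-k}$. The additive character $\chi:\mathbb{Q}_p\to\mathbb{C}$ is $\chi(x)=\exp\!\big(2\pi i\sum_{j=k}^{-1}x_jp^j\big)$ if $|x|>1$ and $\chi(x)=1$ if $|x|\le 1$. $dx$ is the Haar measure on $\mathbb{Q}_p$ normalized so that each ball $\{x:|x-x_0|\le p^r\}$ has measure $p^r$. *)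

theory Defs
  imports "HOL-Probability.Probability"
begin

text \<open>p-adic numbers represented by their standard digit expansion
  x = sum_j (x j) p^j : a digit function int => nat with all digits < p and
  only finitely many nonzero digits at negative positions.\<close>

type_synonym padic = "int \<Rightarrow> nat"

definition padic_num :: "nat \<Rightarrow> padic \<Rightarrow> bool" where
  "padic_num p x \<longleftrightarrow> (\<forall>j. x j < p) \<and> (\<exists>k. \<forall>j<k. x j = 0)"

definition padic_trunc :: "nat \<Rightarrow> padic \<Rightarrow> int \<Rightarrow> rat" where
  "padic_trunc p x N = (\<Sum>j\<in>{j. j < N \<and> x j \<noteq> 0}. of_nat (x j) * (of_nat p) powi j)"

text \<open>r lies in p^K Z_(p), i.e. the p-adic valuation of r is at least K.\<close>
definition padic_small :: "nat \<Rightarrow> int \<Rightarrow> rat \<Rightarrow> bool" where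
  "padic_small p K r \<longleftrightarrow>
     (\<exists>a b::int. b \<noteq> 0 \<and> \<not> int p dvd b \<and> r = of_int a / of_int b * (of_nat p) powi K)"

definition padic_lim :: "nat \<Rightarrow> (int \<Rightarrow> rat) \<Rightarrow> padic \<Rightarrow> bool" where
  "padic_lim p s z \<longleftrightarrow> padic_num p z \<and>
     (\<forall>K. \<exists>N0. \<forall>N\<ge>N0. padic_small p K (s N - padic_trunc p z N))"

definition padic_limit :: "nat \<Rightarrow> (int \<Rightarrow> rat) \<Rightarrow> padic" where
  "padic_limit p s = (THE z. padic_lim p s z)"

definition padic_of_int :: "nat \<Rightarrow> int \<Rightarrow> padic" where
  "padic_of_int p m = padic_limit p (\<lambda>_. of_int m)"

definition padic_mul :: "nat \<Rightarrow> padic \<Rightarrow> padic \<Rightarrow> padic" where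
  "padic_mul p x y = padic_limit p (\<lambda>N. padic_trunc p x N * padic_trunc p y N)"

definition padic_poly :: "nat \<Rightarrow> (nat \<Rightarrow> padic) \<Rightarrow> nat \<Rightarrow> padic \<Rightarrow> padic" where
  "padic_poly p a n x =
     padic_limit p (\<lambda>N. \<Sum>j=1..n. padic_trunc p (a j) N * padic_trunc p x N ^ j)"

definition padic_abs :: "nat \<Rightarrow> padic \<Rightarrow> real" where
  "padic_abs p x = (if x = (\<lambda>_. 0) then 0
      else real p powi (- (THE k. x k \<noteq> 0 \<and> (\<forall>j<k. x j = 0))))"

definition padic_chi :: "nat \<Rightarrow> padic \<Rightarrow> complex" where
  "padic_chi p x = (if padic_abs p x \<le> 1 then 1
      else exp (2 * pi * \<i> *
        of_real (\<Sum>j\<in>{j. j < 0 \<and> x j \<noteq> 0}. real (x j) * real p powi j)))"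

text \<open>Haar measure on the unit ball Z_p = {x. |x| <= 1}: digits at negative
  positions are 0, digits at positions j >= 0 are independent and uniform
  on {0..p-1}.  Every ball of radius p^r (r <= 0) has measure p^r.\<close>
definition padic_haar_Zp :: "nat \<Rightarrow> padic measure" where
  "padic_haar_Zp p = (\<Pi>\<^sub>M j\<in>(UNIV::int set).
      uniform_count_measure (if j < 0 then {0} else {0..<p}))"

end

theory Submission
  imports Defs
begin

text \<open>Choose \<open>L\<close> such that no coefficient has digits below position \<open>-L\<close>, and let \<open>A j\<close> be the
  integer \<open>p^L a_j\<close> truncated modulo \<open>p^(2L)\<close>. For \<open>x \<in> \<int>_p\<close> the character of
  \<open>a_1 x + ... + a_n x^n\<close> depends only on \<open>X = x mod p^L\<close> and equals \<open>e2pi (P X / p^L)\<close> with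
  \<open>P X = \<Sum>j. A j X^j\<close>, so the integral is the normalised exponential sum
  \<open>p^-L \<Sum>X<p^L. e2pi (P X / p^L)\<close>. If \<open>|a_1| = p^m\<close> with \<open>m \<ge> 2\<close> and \<open>L = w + m\<close>, then
  \<open>A 1 = p^w u\<close> with \<open>p\<close> not dividing \<open>u\<close>, while \<open>|j a_j| < |a_1|\<close> gives \<open>p^(w+1) | j A j\<close>.
  Hence \<open>P (X + p^(m-1) y) = P X + P' X p^(m-1) y\<close> modulo \<open>p^L\<close>, where \<open>P' X = p^w c\<close> and \<open>p\<close> does
  not divide \<open>c\<close>: shifting \<open>X\<close> by \<open>p^(m-1) y\<close> multiplies the summand by the \<open>p\<close>-th root of
  unity \<open>e2pi (c y / p)\<close>, and averaging over \<open>y < p\<close> shows that the sum vanishes.\<close>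

section \<open>Exponential sums\<close>

definition e2pi :: "real \<Rightarrow> complex" where
  "e2pi r = exp (2 * pi * \<i> * complex_of_real r)"

lemma e2pi_add: "e2pi (r + s) = e2pi r * e2pi s"
  unfolding e2pi_def by (simp add: distrib_left exp_add)

lemma e2pi_eq_1_iff: "e2pi r = 1 \<longleftrightarrow> r \<in> \<int>"
proof
  assume "e2pi r = 1"
  then obtain k :: int where "Im (2 * pi * \<i> * complex_of_real r) = real_of_int (2 * k) * pi"
    unfolding e2pi_def exp_eq_1 by blast
  then have "r = of_int k" by simp
  then show "r \<in> \<int>" by simp
next
  assume "r \<in> \<int>"
  then obtain k where "r = of_int k" by (auto elim: Ints_cases)
  then show "e2pi r = 1"
    unfolding e2pi_def using exp_2pi_1_int[of k] by (simp add: mult.commute mult.left_commute)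
qed

lemma e2pi_of_int [simp]: "e2pi (of_int k) = 1"
  by (simp add: e2pi_eq_1_iff)

lemma e2pi_add_of_int: "e2pi (r + of_int k) = e2pi r"
  by (simp add: e2pi_add)

lemma e2pi_of_nat_mult: "e2pi (real k * r) = e2pi r ^ k"
proof -
  have "e2pi (real k * r) = exp (of_nat k * (2 * pi * \<i> * complex_of_real r))"
    unfolding e2pi_def by (simp add: algebra_simps)
  then show ?thesis by (simp add: exp_of_nat_mult e2pi_def)
qed

lemma e2pi_divide_cong:
  fixes a b q :: int
  assumes "q dvd a - b" "q \<noteq> 0"
  shows "e2pi (of_int a / of_int q) = e2pi (of_int b / of_int q)"
proof -
  obtain k where "a - b = q * k" using assms(1) by (rule dvdE)
  then have "of_int a / of_int q = of_int b / of_int q + (of_int k :: real)"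
    using assms(2) by (simp add: field_simps)
  then show ?thesis by (simp add: e2pi_add_of_int)
qed

lemma e2pi_sum_multiples_eq_0:
  fixes c :: int
  assumes "q > 0" and "\<not> int q dvd c"
  shows "(\<Sum>y<q. e2pi (of_int c * real y / real q)) = 0"
proof -
  define z where "z = e2pi (of_int c / real q)"
  have "e2pi (of_int c * real y / real q) = z ^ y" for y
    unfolding z_def using e2pi_of_nat_mult[of y "of_int c / real q"] by (simp add: mult.commute)
  moreover have "z ^ q = 1"
    using e2pi_of_nat_mult[of q "of_int c / real q"] assms(1) unfolding z_def
    by simp
  moreover have "z \<noteq> 1"
  proof
    assume "z = 1"
    then obtain k :: int where "of_int c / real q = of_int k"
      unfolding z_def e2pi_eq_1_iff by (auto elim: Ints_cases)
    then have "real_of_int c = real_of_int (int q * k)" using assms(1) by (simp add: field_simps)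
    then have "c = int q * k" by (simp only: of_int_eq_iff)
    then show False using assms(2) by simp
  qed
  ultimately show ?thesis by (simp add: sum_gp_strict)
qed

lemma sum_periodic_shift:
  fixes F :: "int \<Rightarrow> 'a::comm_monoid_add"
  assumes "M > 0" and "\<And>X. F (X mod M) = F X"
  shows "(\<Sum>X\<in>{0..<M}. F (X + h)) = (\<Sum>X\<in>{0..<M}. F X)"
proof -
  have "(\<Sum>X\<in>{0..<M}. F (X + h)) = (\<Sum>X\<in>{0..<M}. F ((X + h) mod M))"
    using assms(2) by simp
  also have "\<dots> = (\<Sum>X\<in>{0..<M}. F X)"
    by (rule sum.reindex_bij_witness[where i = "\<lambda>Y. (Y - h) mod M" and j = "\<lambda>X. (X + h) mod M"])
      (use assms(1) in \<open>auto simp: mod_diff_left_eq mod_add_left_eq\<close>)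
  finally show ?thesis .
qed

lemma dvd_diff_mult:
  fixes a a' b b' M :: "'a::comm_ring_1"
  assumes "M dvd a' - a" "M dvd b' - b"
  shows "M dvd a' * b' - a * b"
proof -
  have "a' * b' - a * b = a' * (b' - b) + (a' - a) * b" by (simp add: algebra_simps)
  then show ?thesis using assms by simp
qed

lemma dvd_diff_power:
  fixes a a' M :: "'a::comm_ring_1"
  assumes "M dvd a' - a"
  shows "M dvd a' ^ j - a ^ j"
  by (induction j) (simp_all add: dvd_diff_mult[OF assms])

lemma dvd_diff_sum:
  fixes f f' :: "'b \<Rightarrow> 'a::comm_ring_1"
  assumes "\<And>j. j \<in> A \<Longrightarrow> M dvd f' j - f j"
  shows "M dvd sum f' A - sum f A"
  using assms by (simp add: sum_subtractf[symmetric] dvd_sum)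

lemma dvd_diff_poly:
  fixes A :: "nat \<Rightarrow> 'a::comm_ring_1"
  assumes "M dvd X' - X"
  shows "M dvd (\<Sum>j\<in>J. A j * X' ^ j) - (\<Sum>j\<in>J. A j * X ^ j)"
  using assms by (intro dvd_diff_sum dvd_diff_mult dvd_diff_power) simp_all

lemma prime_power_dvd_mult_imp_dvd_pred_power:
  fixes g :: int
  assumes p: "prime p" and k: "k \<ge> 1" and dvd: "int p ^ e dvd int k * g"
  shows "int p ^ e dvd int p ^ (k - 1) * g"
proof -
  obtain t where t: "gcd (p ^ e) k = p ^ t"
    using divides_primepow_nat[OF p, of "gcd (p ^ e) k" e] by auto
  have "p ^ t dvd k" using t by (metis gcd_dvd2)
  then have "p ^ t \<le> k" using k by (simp add: dvd_imp_le)
  also have "k < 2 ^ k" by (rule less_exp)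
  also have "2 ^ k \<le> p ^ k" using prime_ge_2_nat[OF p] by (simp add: power_mono)
  finally have "t < k" using prime_ge_2_nat[OF p] by (simp add: power_less_imp_less_exp)
  obtain u v where uv: "u * int p ^ e + v * int k = int p ^ t"
    using bezout_int[of "int p ^ e" "int k"] t gcd_int_int_eq[of "p ^ e" k] by auto
  have "int p ^ t * g = int p ^ e * (u * g) + v * (int k * g)"
    by (simp flip: uv add: algebra_simps)
  then have "int p ^ e dvd int p ^ t * g" using dvd by simp
  moreover have "int p ^ t dvd int p ^ (k - 1)" using \<open>t < k\<close> by (simp add: le_imp_power_dvd)
  ultimately show ?thesis by (meson dvd_trans mult_dvd_mono dvd_refl)
qed

text \<open>From \<open>p^(w+1) | j a\<close> the higher binomial terms of \<open>a (X + p^(m-1) y)^j\<close> vanish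
  modulo \<open>p^(w+m)\<close>: the factor \<open>k\<close> of \<open>k (j choose k) = j ((j-1) choose (k-1))\<close> has
  \<open>p\<close>-valuation below \<open>k\<close>.\<close>
lemma prime_power_dvd_binomial_term:
  fixes a :: int
  assumes p: "prime p" and m: "m \<ge> 2" and k: "1 \<le> k" "k \<le> j"
    and dvd: "int p ^ (w+1) dvd int j * a"
  shows "int p ^ (w+m) dvd a * int (j choose k) * int p ^ ((m-1) * k)"
proof -
  define g where "g = a * int (j choose k)"
  have "k * (j choose k) = j * ((j - 1) choose (k - 1))"
    using times_binomial_minus1_eq[of k j] k by simp
  then have "int k * g = int j * a * int ((j - 1) choose (k - 1))"
    unfolding g_def by (simp add: algebra_simps flip: of_nat_mult)
  then have "int p ^ (w+1) dvd int k * g" using dvd by simp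
  then have "int p ^ (w+1) dvd int p ^ (k - 1) * g"
    using p k(1) by (rule prime_power_dvd_mult_imp_dvd_pred_power[rotated 2])
  define E where "E = (m-1)*k - (k-1)"
  have "k - 1 \<le> (m-1) * k" and wm: "w + m \<le> (w+1) + E"
  proof -
    have "m - 1 = Suc (m - 2)" using m by simp
    then have "(m-1) * k = (m-2) * k + k" by simp
    moreover have "m - 2 \<le> (m-2) * k" using k by simp
    ultimately show "k - 1 \<le> (m-1) * k" "w + m \<le> (w+1) + E" unfolding E_def using m k by linarith+
  qed
  then have "int p ^ (k - 1) * g * int p ^ E = g * int p ^ ((m-1)*k)"
    unfolding E_def by (metis power_add le_add_diff_inverse mult.commute mult.left_commute)
  moreover have "int p ^ (w+1) * int p ^ E dvd int p ^ (k - 1) * g * int p ^ E"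
    using \<open>int p ^ (w+1) dvd int p ^ (k - 1) * g\<close> by (rule mult_dvd_mono) simp
  ultimately have "int p ^ ((w+1) + E) dvd g * int p ^ ((m-1)*k)"
    by (simp only: power_add)
  then show ?thesis unfolding g_def
    using le_imp_power_dvd[OF wm, of "int p"] dvd_trans by blast
qed

lemma binomial_shift_cong:
  fixes a X y :: int
  assumes p: "prime p" and m: "m \<ge> 2" and j: "j \<ge> 1"
    and dvd: "j \<ge> 2 \<Longrightarrow> int p ^ (w+1) dvd int j * a"
  shows "int p ^ (w+m) dvd a * (X + int p ^ (m-1) * y) ^ j
           - (a * X ^ j + int j * a * X ^ (j-1) * (int p ^ (m-1) * y))"
proof (cases "j = 1")
  case True
  then show ?thesis by (simp add: algebra_simps)
next
  case False
  then have j2: "j \<ge> 2" using j by simp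
  define h where "h = int p ^ (m-1) * y"
  define b where "b k = of_nat (j choose k) * h ^ k * X ^ (j - k)" for k
  have "(X + h) ^ j = (\<Sum>k\<le>j. b k)"
    unfolding b_def by (subst add.commute) (rule binomial_ring)
  also have "{..j} = {0, 1} \<union> {2..j}" using j2 by auto
  also have "(\<Sum>k\<in>{0, 1} \<union> {2..j}. b k) = b 0 + b 1 + (\<Sum>k\<in>{2..j}. b k)"
    by (subst sum.union_disjoint) auto
  also have "b 0 + b 1 = X ^ j + int j * h * X ^ (j - 1)"
    unfolding b_def by simp
  finally have "a * (X + h) ^ j - (a * X ^ j + int j * a * X ^ (j-1) * h) = (\<Sum>k\<in>{2..j}. a * b k)"
    by (simp add: algebra_simps sum_distrib_left)
  moreover have "int p ^ (w+m) dvd a * b k" if "k \<in> {2..j}" for k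
  proof -
    have "int p ^ (w+m) dvd a * int (j choose k) * int p ^ ((m-1) * k)"
      using prime_power_dvd_binomial_term[OF p m, of k j w a] that dvd j2 by auto
    then have "int p ^ (w+m) dvd a * int (j choose k) * int p ^ ((m-1) * k) * (y ^ k * X ^ (j - k))"
      by (rule dvd_mult2)
    moreover have "a * b k = a * int (j choose k) * int p ^ ((m-1) * k) * (y ^ k * X ^ (j - k))"
      unfolding b_def h_def by (simp add: power_mult_distrib power_mult[symmetric] mult_ac)
    ultimately show ?thesis by (simp only:)
  qed
  ultimately show ?thesis unfolding h_def by (metis dvd_sum)
qed

lemma poly_shift_cong:
  fixes A :: "nat \<Rightarrow> int" and X y :: int
  assumes p: "prime p" and m: "m \<ge> 2"
    and dvd: "\<And>j. j \<in> {2..n} \<Longrightarrow> int p ^ (w+1) dvd int j * A j"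
  shows "int p ^ (w+m) dvd (\<Sum>j=1..n. A j * (X + int p ^ (m-1) * y) ^ j)
           - ((\<Sum>j=1..n. A j * X ^ j) + (\<Sum>j=1..n. int j * A j * X ^ (j-1)) * (int p ^ (m-1) * y))"
proof -
  have "int p ^ (w+m) dvd (\<Sum>j=1..n. A j * (X + int p ^ (m-1) * y) ^ j)
           - (\<Sum>j=1..n. A j * X ^ j + int j * A j * X ^ (j-1) * (int p ^ (m-1) * y))"
    using dvd by (intro dvd_diff_sum binomial_shift_cong[OF p m]) auto
  then show ?thesis by (simp add: sum.distrib sum_distrib_right)
qed

lemma derivative_eq_prime_power_mult:
  fixes A :: "nat \<Rightarrow> int" and u X :: int
  assumes n: "n \<ge> 1" and A1: "A 1 = int p ^ w * u" and u: "\<not> int p dvd u"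
    and dvd: "\<And>j. j \<in> {2..n} \<Longrightarrow> int p ^ (w+1) dvd int j * A j"
  shows "\<exists>c. (\<Sum>j=1..n. int j * A j * X ^ (j-1)) = int p ^ w * c \<and> \<not> int p dvd c"
proof -
  have "int p ^ (w+1) dvd int j * A j * X ^ (j-1)" if "j \<in> {2..n}" for j
    using dvd[OF that] by (rule dvd_mult2)
  then have "int p ^ (w+1) dvd (\<Sum>j\<in>{2..n}. int j * A j * X ^ (j-1))"
    by (rule dvd_sum)
  then obtain r where r: "(\<Sum>j\<in>{2..n}. int j * A j * X ^ (j-1)) = int p ^ (w+1) * r"
    by (rule dvdE)
  have "{1..n} = insert 1 {2..n}" using n by auto
  then have "(\<Sum>j=1..n. int j * A j * X ^ (j-1)) = int p ^ w * (u + int p * r)"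
    using A1 r by (simp add: algebra_simps)
  moreover have "\<not> int p dvd u + int p * r" using u by (simp add: dvd_add_left_iff)
  ultimately show ?thesis by blast
qed

lemma e2pi_poly_shift:
  fixes A :: "nat \<Rightarrow> int" and X c :: int
  assumes p: "prime p" and m: "m \<ge> 2"
    and dvd: "\<And>j. j \<in> {2..n} \<Longrightarrow> int p ^ (w+1) dvd int j * A j"
    and c: "(\<Sum>j=1..n. int j * A j * X ^ (j-1)) = int p ^ w * c"
  shows "e2pi (of_int (\<Sum>j=1..n. A j * (X + int p ^ (m-1) * int y) ^ j) / real p ^ (w+m))
    = e2pi (of_int (\<Sum>j=1..n. A j * X ^ j) / real p ^ (w+m)) * e2pi (of_int c * real y / real p)"
proof -
  define M where "M = int p ^ (w+m)"
  define P where "P X = (\<Sum>j=1..n. A j * X ^ j)" for X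
  define h where "h = int p ^ (m-1) * int y"
  have p0: "p > 0" using p prime_gt_0_nat by blast
  have "M dvd P (X + h) - (P X + int p ^ w * c * h)"
    unfolding M_def P_def h_def c[symmetric] by (rule poly_shift_cong[OF p m dvd])
  then have "e2pi (of_int (P (X + h)) / of_int M)
      = e2pi (of_int (P X + int p ^ w * c * h) / of_int M)"
    unfolding M_def using p0 by (intro e2pi_divide_cong) simp_all
  also have "of_int (P X + int p ^ w * c * h) / of_int M
      = of_int (P X) / of_int M + of_int c * real y / real p"
  proof -
    have "M = int p ^ w * int p ^ (m-1) * int p"
      unfolding M_def using m by (simp flip: power_add power_Suc2)
    then show ?thesis
      unfolding h_def using p0 by (simp add: field_simps)
  qed
  finally show ?thesis unfolding M_def P_def h_def by (simp add: e2pi_add)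
qed

lemma exp_sum_poly_eq_0:
  fixes A :: "nat \<Rightarrow> int" and u :: int
  assumes p: "prime p" and m: "m \<ge> 2" and n: "n \<ge> 1"
    and A1: "A 1 = int p ^ w * u" and u: "\<not> int p dvd u"
    and dvd: "\<And>j. j \<in> {2..n} \<Longrightarrow> int p ^ (w+1) dvd int j * A j"
  shows "(\<Sum>X\<in>{0..<int p ^ (w+m)}. e2pi (of_int (\<Sum>j=1..n. A j * X ^ j) / real p ^ (w+m))) = 0"
proof -
  define M where "M = int p ^ (w+m)"
  define F where "F X = e2pi (of_int (\<Sum>j=1..n. A j * X ^ j) / real p ^ (w+m))" for X
  define h where "h y = int p ^ (m-1) * int y" for y :: nat
  have p0: "p > 0" using p prime_gt_0_nat by blast
  have M0: "M > 0" unfolding M_def using p0 by simp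
  have F_mod: "F (X mod M) = F X" for X
    using e2pi_divide_cong[OF dvd_diff_poly[of M "X mod M" X A "{1..n}"]] M0
    unfolding F_def M_def by (simp add: mod_eq_dvd_iff[symmetric])
  have "of_nat p * (\<Sum>X\<in>{0..<M}. F X) = (\<Sum>y<p. \<Sum>X\<in>{0..<M}. F (X + h y))"
    using sum_periodic_shift[of M F, OF M0 F_mod] by simp
  also have "\<dots> = (\<Sum>X\<in>{0..<M}. \<Sum>y<p. F (X + h y))" by (rule sum.swap)
  also have "\<dots> = 0"
  proof (rule sum.neutral, rule ballI)
    fix X assume "X \<in> {0..<M}"
    obtain c where c: "(\<Sum>j=1..n. int j * A j * X ^ (j-1)) = int p ^ w * c" "\<not> int p dvd c"
      using derivative_eq_prime_power_mult[OF n A1 u dvd] by blast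
    have "F (X + h y) = F X * e2pi (of_int c * real y / real p)" for y
      unfolding F_def h_def by (rule e2pi_poly_shift[OF p m dvd c(1)])
    then have "(\<Sum>y<p. F (X + h y)) = F X * (\<Sum>y<p. e2pi (of_int c * real y / real p))"
      by (simp add: sum_distrib_left)
    also have "\<dots> = 0" using e2pi_sum_multiples_eq_0[OF p0 c(2)] by simp
    finally show "(\<Sum>y<p. F (X + h y)) = 0" .
  qed
  finally show ?thesis unfolding F_def M_def using p0 by simp
qed


section \<open>Digit expansions and \<open>p\<close>-adic limits\<close>

text \<open>\<open>p^L\<close> times the truncation of \<open>x\<close> below position \<open>n - L\<close>.\<close>
definition digits_val :: "nat \<Rightarrow> padic \<Rightarrow> nat \<Rightarrow> nat \<Rightarrow> int" where
  "digits_val p x L n = (\<Sum>t<n. int (x (int t - int L)) * int p ^ t)"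

definition padic_cauchy :: "nat \<Rightarrow> (nat \<Rightarrow> int) \<Rightarrow> bool" where
  "padic_cauchy p S \<longleftrightarrow> (\<forall>i i'. i \<le> i' \<longrightarrow> int p ^ i dvd S i' - S i)"

text \<open>For a Cauchy sequence \<open>S\<close> this is the \<open>p\<close>-adic limit of \<open>S i / p^L\<close>: its digit at
  position \<open>j\<close> is the base-\<open>p\<close> digit of \<open>S\<close> at position \<open>j + L\<close>.\<close>
definition padic_of_seq :: "nat \<Rightarrow> (nat \<Rightarrow> int) \<Rightarrow> nat \<Rightarrow> padic" where
  "padic_of_seq p S L j = (if j < - int L then 0
      else nat ((S (nat (j + int L) + 1) div int p ^ nat (j + int L)) mod int p))"

lemma padic_cauchyD: "padic_cauchy p S \<Longrightarrow> i \<le> i' \<Longrightarrow> int p ^ i dvd S i' - S i"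
  unfolding padic_cauchy_def by blast

lemma padic_cauchy_const: "padic_cauchy p (\<lambda>_. c)"
  unfolding padic_cauchy_def by simp

lemma padic_cauchy_mult:
  "padic_cauchy p S \<Longrightarrow> padic_cauchy p T \<Longrightarrow> padic_cauchy p (\<lambda>i. S i * T i)"
  unfolding padic_cauchy_def by (blast intro: dvd_diff_mult)

lemma padic_cauchy_power: "padic_cauchy p S \<Longrightarrow> padic_cauchy p (\<lambda>i. S i ^ k)"
  unfolding padic_cauchy_def by (blast intro: dvd_diff_power)

lemma padic_cauchy_sum:
  "(\<And>j. j \<in> J \<Longrightarrow> padic_cauchy p (S j)) \<Longrightarrow> padic_cauchy p (\<lambda>i. \<Sum>j\<in>J. S j i)"
  unfolding padic_cauchy_def by (blast intro: dvd_diff_sum)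

lemma padic_cauchy_mod_power: "padic_cauchy p (\<lambda>i. c mod int p ^ i)"
  unfolding padic_cauchy_def
  by (auto simp: mod_eq_dvd_iff[symmetric] mod_mod_cancel le_imp_power_dvd)

lemma digits_val_Suc:
  "digits_val p x L (Suc t) = digits_val p x L t + int (x (int t - int L)) * int p ^ t"
  unfolding digits_val_def by simp

lemma digits_val_cong:
  assumes "n \<le> n'"
  shows "int p ^ n dvd digits_val p x L n' - digits_val p x L n"
  using assms
proof (induction n' rule: dec_induct)
  case (step t)
  have "int p ^ n dvd int (x (int t - int L)) * int p ^ t"
    using step.hyps(1) by (simp add: le_imp_power_dvd)
  moreover have "digits_val p x L (Suc t) - digits_val p x L n
      = (digits_val p x L t - digits_val p x L n) + int (x (int t - int L)) * int p ^ t"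
    by (simp add: digits_val_Suc)
  ultimately show ?case using step.IH by (metis dvd_add)
qed simp

lemma padic_cauchy_digits_val: "padic_cauchy p (\<lambda>i. digits_val p x L (i + L))"
  unfolding padic_cauchy_def
  by (metis add_le_cancel_right digits_val_cong dvd_trans le_add1 le_imp_power_dvd)

lemma digits_val_bounds:
  assumes "\<And>t. t < n \<Longrightarrow> x (int t - int L) < p"
  shows "0 \<le> digits_val p x L n" "digits_val p x L n < int p ^ n"
proof -
  show "0 \<le> digits_val p x L n" unfolding digits_val_def by (intro sum_nonneg) simp
  show "digits_val p x L n < int p ^ n"
    using assms
  proof (induction n)
    case (Suc t)
    have "int (x (int t - int L)) * int p ^ t \<le> (int p - 1) * int p ^ t"
      using Suc.prems[of t] by (intro mult_right_mono) auto
    with Suc show ?case by (simp add: digits_val_Suc algebra_simps)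
  qed (simp add: digits_val_def)
qed

lemma digits_val_mod:
  assumes "\<And>j. x j < p" and "k \<le> n"
  shows "digits_val p x L n mod int p ^ k = digits_val p x L k"
proof -
  obtain r where "digits_val p x L n - digits_val p x L k = int p ^ k * r"
    using digits_val_cong[OF assms(2)] by (rule dvdE)
  then have "digits_val p x L n = digits_val p x L k + int p ^ k * r" by simp
  then show ?thesis using digits_val_bounds[of k x L p] assms(1) by simp
qed

lemma sum_digits_eq_mod:
  assumes "p > 0" and "padic_cauchy p S"
  shows "(\<Sum>t<n. ((S (t+1) div int p ^ t) mod int p) * int p ^ t) = S n mod int p ^ n"
proof (induction n)
  case (Suc n)
  have "S (Suc n) mod int p ^ n = S n mod int p ^ n"
    using padic_cauchyD[OF assms(2), of n "Suc n"] by (simp add: mod_eq_dvd_iff)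
  moreover have "S (Suc n) mod (int p ^ n * int p)
      = int p ^ n * (S (Suc n) div int p ^ n mod int p) + S (Suc n) mod int p ^ n"
    using assms(1) by (intro zmod_zmult2_eq) simp
  ultimately show ?case using Suc by (simp add: algebra_simps)
qed simp

lemma sum_powers_leading_term:
  fixes e :: "nat \<Rightarrow> int" and q :: int
  assumes "\<And>t. t < i \<Longrightarrow> e t = 0" and "i < n"
  shows "\<exists>r. (\<Sum>t<n. e t * q ^ t) = q ^ i * (e i + q * r)"
proof -
  have "(\<Sum>t<n. e t * q ^ t) = (\<Sum>t\<in>{0..<i}. e t * q ^ t) + (\<Sum>t\<in>{i..<n}. e t * q ^ t)"
    using assms(2) by (simp add: lessThan_atLeast0 sum.atLeastLessThan_concat)
  also have "(\<Sum>t\<in>{0..<i}. e t * q ^ t) = 0" using assms(1) by simp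
  also have "(\<Sum>t\<in>{i..<n}. e t * q ^ t) = e i * q ^ i + (\<Sum>t\<in>{Suc i..<n}. e t * q ^ t)"
    using assms(2) by (rule sum.atLeast_Suc_lessThan)
  finally have sum: "(\<Sum>t<n. e t * q ^ t) = e i * q ^ i + (\<Sum>t\<in>{Suc i..<n}. e t * q ^ t)"
    by simp
  have "q ^ Suc i dvd (\<Sum>t\<in>{Suc i..<n}. e t * q ^ t)"
    by (intro dvd_sum dvd_mult le_imp_power_dvd) simp
  then obtain r where "(\<Sum>t\<in>{Suc i..<n}. e t * q ^ t) = q ^ Suc i * r" by (rule dvdE)
  with sum show ?thesis by (intro exI[of _ r]) (simp add: algebra_simps)
qed

lemma digits_val_leading_digit:
  assumes "\<And>j. x j < p" and "x k \<noteq> 0" and "\<And>j. j < k \<Longrightarrow> x j = 0"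
    and "k = int i - int L" and "i < n"
  shows "\<exists>u. digits_val p x L n = int p ^ i * u \<and> \<not> int p dvd u"
proof -
  obtain r where r: "digits_val p x L n = int p ^ i * (int (x k) + int p * r)"
    using sum_powers_leading_term[of i "\<lambda>t. int (x (int t - int L))" n "int p"] assms(3-5)
    unfolding digits_val_def by auto
  have "\<not> int p dvd int (x k)"
    using assms(1)[of k] assms(2) by (auto dest: dvd_imp_le)
  then have "\<not> int p dvd int (x k) + int p * r" by (simp add: dvd_add_left_iff)
  with r show ?thesis by blast
qed

lemma sum_digits_powi_eq_digits_val:
  assumes p: "p > 0" and low: "\<And>j. j < - int L \<Longrightarrow> x j = 0" and N: "N \<ge> - int L"
  shows "(\<Sum>j\<in>{j. j < N \<and> x j \<noteq> 0}. of_nat (x j) * (of_nat p :: 'a::field_char_0) powi j)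
         = of_int (digits_val p x L (nat (N + int L))) / of_nat p ^ L"
proof -
  define K where "K = nat (N + int L)"
  have "(\<Sum>j\<in>{j. j < N \<and> x j \<noteq> 0}. of_nat (x j) * (of_nat p :: 'a) powi j)
      = (\<Sum>j\<in>{- int L..<N}. of_nat (x j) * of_nat p powi j)"
    using low by (intro sum.mono_neutral_left) (auto simp: not_less[symmetric])
  also have "{- int L..<N} = (\<lambda>t. int t - int L) ` {..<K}"
  proof (intro equalityI subsetI)
    fix j assume "j \<in> {- int L..<N}"
    then show "j \<in> (\<lambda>t. int t - int L) ` {..<K}"
      unfolding K_def by (intro image_eqI[of _ _ "nat (j + int L)"]) auto
  qed (auto simp: K_def)
  also have "(\<Sum>j\<in>(\<lambda>t. int t - int L) ` {..<K}. of_nat (x j) * (of_nat p :: 'a) powi j)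
      = (\<Sum>t<K. of_nat (x (int t - int L)) * of_nat p ^ t) / of_nat p ^ L"
    using p by (simp add: sum.reindex inj_on_def sum_divide_distrib power_int_diff)
  finally show ?thesis unfolding K_def digits_val_def by simp
qed

lemma padic_trunc_eq_digits_val:
  assumes "p > 0" and "\<And>j. j < - int L \<Longrightarrow> x j = 0" and "N \<ge> 0"
  shows "padic_trunc p x N = of_int (digits_val p x L (nat N + L)) / of_nat p ^ L"
  using sum_digits_powi_eq_digits_val[OF assms(1,2), where N = N] assms(3)
  unfolding padic_trunc_def by (simp add: nat_add_distrib)

lemma padic_of_seq_below: "j < - int L \<Longrightarrow> padic_of_seq p S L j = 0"
  unfolding padic_of_seq_def by simp

lemma padic_num_of_seq:
  assumes "p > 0"
  shows "padic_num p (padic_of_seq p S L)"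
  unfolding padic_num_def
proof (intro conjI allI)
  fix j
  have "(S (nat (j + int L) + 1) div int p ^ nat (j + int L)) mod int p < int p" using assms by simp
  then show "padic_of_seq p S L j < p"
    unfolding padic_of_seq_def using assms by (auto simp: nat_less_iff)
next
  show "\<exists>k. \<forall>j<k. padic_of_seq p S L j = 0" using padic_of_seq_below by blast
qed

lemma digits_val_of_seq:
  assumes "p > 0" and "padic_cauchy p S"
  shows "digits_val p (padic_of_seq p S L) L n = S n mod int p ^ n"
proof -
  have "digits_val p (padic_of_seq p S L) L n
      = (\<Sum>t<n. ((S (t+1) div int p ^ t) mod int p) * int p ^ t)"
    unfolding digits_val_def padic_of_seq_def using assms(1) by (intro sum.cong) simp_all
  also have "\<dots> = S n mod int p ^ n" by (rule sum_digits_eq_mod[OF assms])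
  finally show ?thesis .
qed

lemma padic_small_diff:
  assumes p: "prime p" and "padic_small p K r" and "padic_small p K r'"
  shows "padic_small p K (r - r')"
proof -
  define Q where "Q = (of_nat p :: rat) powi K"
  obtain a b where ab: "b \<noteq> 0" "\<not> int p dvd b" "r = of_int a / of_int b * Q"
    using assms(2) unfolding padic_small_def Q_def by blast
  obtain a' b' where ab': "b' \<noteq> 0" "\<not> int p dvd b'" "r' = of_int a' / of_int b' * Q"
    using assms(3) unfolding padic_small_def Q_def by blast
  have "b * b' \<noteq> 0" using ab(1) ab'(1) by simp
  moreover have "\<not> int p dvd b * b'"
    using ab(2) ab'(2) p by (simp add: prime_dvd_mult_iff)
  moreover have "r - r' = of_int (a * b' - a' * b) / of_int (b * b') * Q"
    using ab(1) ab'(1) unfolding ab(3) ab'(3) by (simp add: field_simps)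
  ultimately show ?thesis
    unfolding padic_small_def Q_def by (intro exI[of _ "a * b' - a' * b"] exI[of _ "b * b'"] conjI)
qed

lemma padic_small_of_int_mult_powi:
  assumes p: "prime p" and "K \<le> N"
  shows "padic_small p K (of_int c * of_nat p powi N)"
proof -
  have "(of_nat p :: rat) powi N = of_nat p powi (N - K + K)" by simp
  also have "\<dots> = of_nat p powi (N - K) * of_nat p powi K"
    using prime_gt_0_nat[OF p] by (intro power_int_add) simp
  also have "(of_nat p :: rat) powi (N - K) = of_nat p ^ nat (N - K)"
    using assms(2) by (metis diff_ge_0_iff_ge nat_0_le power_int_of_nat)
  finally have "of_int c * (of_nat p :: rat) powi N
      = of_int (c * int p ^ nat (N - K)) / of_int 1 * of_nat p powi K"
    by simp
  moreover have "\<not> int p dvd 1" using prime_ge_2_nat[OF p] by simp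
  ultimately show ?thesis
    unfolding padic_small_def
    by (intro exI[of _ "c * int p ^ nat (N - K)"] exI[of _ 1] conjI) simp_all
qed

lemma padic_small_imp_dvd:
  assumes p: "prime p" and small: "padic_small p K (of_int D / of_nat p ^ L)"
    and KL: "K + int L \<ge> 0"
  shows "int p ^ nat (K + int L) dvd D"
proof -
  define P Q where "P = (of_nat p :: rat) ^ L" and "Q = (of_nat p :: rat) powi K"
  obtain a b where ab: "b \<noteq> 0" "\<not> int p dvd b" "of_int D / P = of_int a / of_int b * Q"
    using small unfolding padic_small_def P_def Q_def by blast
  have p0: "(of_nat p :: rat) \<noteq> 0" using p prime_gt_0_nat by simp
  then have "P \<noteq> 0" unfolding P_def by simp
  then have "of_int D * of_int b = of_int a * (Q * P)" using ab(1,3) by (simp add: field_simps)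
  also have "Q * P = of_nat p powi (K + int L)"
    unfolding P_def Q_def using p0 by (simp add: power_int_add power_int_of_nat)
  also have "\<dots> = of_int (int p ^ nat (K + int L))"
    using KL by (metis nat_0_le of_int_of_nat_eq of_int_power power_int_of_nat)
  finally have "int p ^ nat (K + int L) dvd D * b"
    by (metis dvd_triv_right mult.commute of_int_eq_iff of_int_mult)
  moreover have "coprime (int p ^ nat (K + int L)) b"
    using p ab(2) by (simp add: prime_imp_coprime prime_nat_int_transfer)
  ultimately show ?thesis by (simp add: coprime_dvd_mult_left_iff)
qed

lemma padic_lim_of_seq:
  assumes p: "prime p" and S: "padic_cauchy p S"
    and s: "\<And>N. N \<ge> 0 \<Longrightarrow> s N = of_int (S (nat N)) / of_nat p ^ L"
  shows "padic_lim p s (padic_of_seq p S L)"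
  unfolding padic_lim_def
proof (intro conjI allI)
  have p0: "p > 0" using p prime_gt_0_nat by blast
  show "padic_num p (padic_of_seq p S L)" using p0 by (rule padic_num_of_seq)
  fix K :: int
  show "\<exists>N0. \<forall>N\<ge>N0. padic_small p K (s N - padic_trunc p (padic_of_seq p S L) N)"
  proof (intro exI allI impI)
    fix N assume N: "max 0 (K + int L) \<le> N"
    define n where "n = nat N"
    have "padic_trunc p (padic_of_seq p S L) N
        = of_int (S (n + L) mod int p ^ (n + L)) / of_nat p ^ L"
      using N unfolding n_def
      by (simp add: padic_trunc_eq_digits_val[OF p0 padic_of_seq_below] digits_val_of_seq[OF p0 S])
    then have "s N - padic_trunc p (padic_of_seq p S L) N
        = of_int (S n - S (n + L) mod int p ^ (n + L)) / of_nat p ^ L"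
      using s[of N] N unfolding n_def by (simp add: diff_divide_distrib)
    moreover obtain c where "S n - S (n + L) mod int p ^ (n + L) = int p ^ n * c"
    proof -
      define M where "M = int p ^ (n + L)"
      have "int p ^ n dvd S (n + L) - S n" using padic_cauchyD[OF S] by simp
      moreover have "int p ^ n dvd S (n + L) - S (n + L) mod M"
        unfolding minus_mod_eq_mult_div M_def by (intro dvd_mult2 le_imp_power_dvd) simp
      moreover have "S n - S (n + L) mod M = (S (n + L) - S (n + L) mod M) - (S (n + L) - S n)"
        by simp
      ultimately have "int p ^ n dvd S n - S (n + L) mod M" by (metis dvd_diff)
      then show ?thesis using that unfolding M_def by (elim dvdE) blast
    qed
    moreover have "(of_nat p :: rat) powi (int n - int L) = of_nat p ^ n / of_nat p ^ L"
      using p0 by (simp add: power_int_diff power_int_of_nat)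
    ultimately have "s N - padic_trunc p (padic_of_seq p S L) N
        = of_int c * of_nat p powi (int n - int L)"
      by simp
    then show "padic_small p K (s N - padic_trunc p (padic_of_seq p S L) N)"
      using padic_small_of_int_mult_powi[OF p, of K "int n - int L" c] N unfolding n_def by simp
  qed
qed

lemma padic_nums_digits_bounded_below:
  assumes "finite I" and "\<And>i. i \<in> I \<Longrightarrow> padic_num p (a i)"
  obtains L where "m \<le> L" and "\<And>i j. i \<in> I \<Longrightarrow> j < - int L \<Longrightarrow> a i j = 0"
proof -
  obtain k where k: "\<And>i j. i \<in> I \<Longrightarrow> j < k i \<Longrightarrow> a i j = 0"
    using assms(2) unfolding padic_num_def by metis
  define L where "L = max m (Max ((\<lambda>i. nat (- k i)) ` I))"
  have L_ge: "nat (- k i) \<le> L" if "i \<in> I" for i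
  proof -
    have "nat (- k i) \<le> Max ((\<lambda>i. nat (- k i)) ` I)" using assms(1) that by (intro Max_ge) auto
    then show ?thesis unfolding L_def by simp
  qed
  then have "a i j = 0" if "i \<in> I" "j < - int L" for i j
  proof -
    have "- k i \<le> int L" using L_ge[OF that(1)] by (simp add: nat_le_iff)
    then show ?thesis using k[OF that(1)] that(2) by simp
  qed
  then show ?thesis using that[of L] unfolding L_def by simp
qed

lemma digit_eq_of_dvd_digits_val_diff:
  assumes "\<And>j. z j < p" and "\<And>j. w j < p" and "p > 0"
    and dvd: "int p ^ Suc t dvd digits_val p z L n - digits_val p w L n" and "Suc t \<le> n"
  shows "z (int t - int L) = w (int t - int L)"
proof -
  have "digits_val p z L k = digits_val p w L k" if "k \<le> Suc t" for k
  proof -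
    have "int p ^ k dvd digits_val p z L n - digits_val p w L n"
      using le_imp_power_dvd[OF that] dvd by (rule dvd_trans)
    then have "digits_val p z L n mod int p ^ k = digits_val p w L n mod int p ^ k"
      by (simp add: mod_eq_dvd_iff)
    then show ?thesis
      using assms(5) that by (simp add: digits_val_mod[OF assms(1)] digits_val_mod[OF assms(2)])
  qed
  from this[of t] this[of "Suc t"] show ?thesis
    using assms(3) by (simp add: digits_val_Suc)
qed

lemma padic_lim_unique:
  assumes p: "prime p" and z: "padic_lim p s z" and w: "padic_lim p s w"
  shows "z = w"
proof
  fix j
  have p0: "p > 0" using p prime_gt_0_nat by blast
  have zd: "\<And>j. z j < p" and wd: "\<And>j. w j < p"
    using z w unfolding padic_lim_def padic_num_def by blast+
  obtain kz kw where kz: "\<forall>j<kz. z j = 0" and kw: "\<forall>j<kw. w j = 0"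
    using z w unfolding padic_lim_def padic_num_def by blast
  define L where "L = nat (max (- kz) (- kw))"
  have "- int L \<le> kz" "- int L \<le> kw" unfolding L_def by auto
  then have zL: "\<And>j. j < - int L \<Longrightarrow> z j = 0" and wL: "\<And>j. j < - int L \<Longrightarrow> w j = 0"
    using kz kw by auto
  show "z j = w j"
  proof (cases "j < - int L")
    case True
    then show ?thesis using zL wL by simp
  next
    case False
    define t where "t = nat (j + int L)"
    obtain N1 where N1: "\<forall>N\<ge>N1. padic_small p (j + 1) (s N - padic_trunc p z N)"
      using z unfolding padic_lim_def by blast
    obtain N2 where N2: "\<forall>N\<ge>N2. padic_small p (j + 1) (s N - padic_trunc p w N)"
      using w unfolding padic_lim_def by blast
    define N where "N = max (max N1 N2) (max 0 (j + 1))"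
    define n where "n = nat N + L"
    have "N \<ge> N1" "N \<ge> N2" "N \<ge> 0" unfolding N_def by simp_all
    then have "padic_small p (j + 1) (s N - padic_trunc p w N)"
      and "padic_small p (j + 1) (s N - padic_trunc p z N)" using N1 N2 by simp_all
    then have "padic_small p (j + 1) ((s N - padic_trunc p w N) - (s N - padic_trunc p z N))"
      by (rule padic_small_diff[OF p])
    moreover have "(s N - padic_trunc p w N) - (s N - padic_trunc p z N)
        = of_int (digits_val p z L n - digits_val p w L n) / of_nat p ^ L"
      using padic_trunc_eq_digits_val[OF p0 zL \<open>N \<ge> 0\<close>] padic_trunc_eq_digits_val[OF p0 wL \<open>N \<ge> 0\<close>]
      unfolding n_def by (simp add: diff_divide_distrib)
    moreover have "nat (j + 1 + int L) = Suc t" unfolding t_def using False by simp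
    ultimately have "int p ^ Suc t dvd digits_val p z L n - digits_val p w L n"
      using padic_small_imp_dvd[OF p, of "j + 1" _ L] False by simp
    moreover have "Suc t \<le> n" unfolding n_def N_def t_def using False by linarith
    ultimately have "z (int t - int L) = w (int t - int L)"
      by (rule digit_eq_of_dvd_digits_val_diff[OF zd wd p0])
    then show ?thesis unfolding t_def using False by simp
  qed
qed

lemma padic_limit_eq_of_seq:
  assumes "prime p" and "padic_cauchy p S"
    and "\<And>N. N \<ge> 0 \<Longrightarrow> s N = of_int (S (nat N)) / of_nat p ^ L"
  shows "padic_limit p s = padic_of_seq p S L"
  unfolding padic_limit_def
  using padic_lim_of_seq[OF assms] padic_lim_unique[OF assms(1)] by blast

lemma padic_of_int_eq_of_seq: "prime p \<Longrightarrow> padic_of_int p c = padic_of_seq p (\<lambda>_. c) 0"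
  unfolding padic_of_int_def by (rule padic_limit_eq_of_seq) (simp_all add: padic_cauchy_const)

lemma padic_mul_eq_of_seq:
  assumes p: "prime p"
    and x: "\<And>j. j < - int Lx \<Longrightarrow> x j = 0" and y: "\<And>j. j < - int Ly \<Longrightarrow> y j = 0"
  shows "padic_mul p x y
    = padic_of_seq p (\<lambda>i. digits_val p x Lx (i + Lx) * digits_val p y Ly (i + Ly)) (Lx + Ly)"
  unfolding padic_mul_def
proof (rule padic_limit_eq_of_seq[OF p])
  have p0: "p > 0" using p prime_gt_0_nat by blast
  show "padic_cauchy p (\<lambda>i. digits_val p x Lx (i + Lx) * digits_val p y Ly (i + Ly))"
    by (intro padic_cauchy_mult padic_cauchy_digits_val)
  fix N :: int assume "N \<ge> 0"
  then show "padic_trunc p x N * padic_trunc p y N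
      = of_int (digits_val p x Lx (nat N + Lx) * digits_val p y Ly (nat N + Ly))
        / of_nat p ^ (Lx + Ly)"
    by (simp add: padic_trunc_eq_digits_val[OF p0 x] padic_trunc_eq_digits_val[OF p0 y] power_add)
qed

lemma padic_poly_eq_of_seq:
  assumes p: "prime p"
    and a: "\<And>j t. j \<in> {1..n} \<Longrightarrow> t < - int L \<Longrightarrow> a j t = 0" and x: "\<And>t. t < 0 \<Longrightarrow> x t = 0"
  shows "padic_poly p a n x
    = padic_of_seq p (\<lambda>i. \<Sum>j=1..n. digits_val p (a j) L (i + L) * digits_val p x 0 i ^ j) L"
  unfolding padic_poly_def
proof (rule padic_limit_eq_of_seq[OF p])
  have p0: "p > 0" using p prime_gt_0_nat by blast
  have "padic_cauchy p (\<lambda>i. digits_val p x 0 (i + 0))" by (rule padic_cauchy_digits_val)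
  then show "padic_cauchy p (\<lambda>i. \<Sum>j=1..n. digits_val p (a j) L (i + L) * digits_val p x 0 i ^ j)"
    by (intro padic_cauchy_sum padic_cauchy_mult padic_cauchy_power padic_cauchy_digits_val) simp
  fix N :: int assume "N \<ge> 0"
  then have "padic_trunc p (a j) N * padic_trunc p x N ^ j
      = of_int (digits_val p (a j) L (nat N + L) * digits_val p x 0 (nat N) ^ j) / of_nat p ^ L"
    if "j \<in> {1..n}" for j
    using padic_trunc_eq_digits_val[OF p0 a[OF that], where N = N]
      padic_trunc_eq_digits_val[OF p0, where L = 0 and x = x and N = N] x
    by simp
  then show "(\<Sum>j=1..n. padic_trunc p (a j) N * padic_trunc p x N ^ j)
      = of_int (\<Sum>j=1..n. digits_val p (a j) L (nat N + L) * digits_val p x 0 (nat N) ^ j)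
        / of_nat p ^ L"
    by (simp add: sum_divide_distrib)
qed


section \<open>Absolute value and additive character\<close>

lemma padic_leading_digit_ex:
  assumes "padic_num p x" and "x \<noteq> (\<lambda>_. 0)"
  obtains k where "x k \<noteq> 0" and "\<And>j. j < k \<Longrightarrow> x j = 0"
proof -
  obtain b where b: "\<And>j. j < b \<Longrightarrow> x j = 0" using assms(1) unfolding padic_num_def by blast
  obtain j0 where j0: "x j0 \<noteq> 0" using assms(2) by auto
  then have "j0 \<ge> b" using b by (meson not_less)
  define t0 where "t0 = (LEAST t. x (b + int t) \<noteq> 0)"
  have "x (b + int (nat (j0 - b))) \<noteq> 0" using j0 \<open>j0 \<ge> b\<close> by simp
  then have "x (b + int t0) \<noteq> 0" unfolding t0_def by (rule LeastI)
  moreover have "x j = 0" if "j < b + int t0" for j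
  proof (cases "j < b")
    case False
    then have "nat (j - b) < t0" using that by simp
    then have "x (b + int (nat (j - b))) = 0" unfolding t0_def using not_less_Least by blast
    then show ?thesis using False by simp
  qed (rule b)
  ultimately show ?thesis using that by blast
qed

lemma padic_abs_eq:
  assumes "x k \<noteq> 0" and "\<And>j. j < k \<Longrightarrow> x j = 0"
  shows "padic_abs p x = real p powi (- k)"
proof -
  have "k' = k" if "x k' \<noteq> 0" "\<forall>j<k'. x j = 0" for k'
  proof -
    have "\<not> k' < k" using assms(2)[of k'] that(1) by blast
    moreover have "\<not> k < k'" using that(2) assms(1) by auto
    ultimately show "k' = k" by simp
  qed
  moreover have "x k \<noteq> 0 \<and> (\<forall>j<k. x j = 0)" using assms by blast
  ultimately have "(THE k. x k \<noteq> 0 \<and> (\<forall>j<k. x j = 0)) = k"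
    by (intro the_equality) blast+
  moreover have "x \<noteq> (\<lambda>_. 0)" using assms(1) by auto
  ultimately show ?thesis unfolding padic_abs_def by simp
qed

lemma padic_abs_less_imp_digit_eq_0:
  assumes p: "p > 1" and x: "padic_num p x" and abs: "padic_abs p x < real p powi k"
    and j: "j \<le> - k"
  shows "x j = 0"
proof (cases "x = (\<lambda>_. 0)")
  case False
  then obtain k' where k': "x k' \<noteq> 0" "\<And>j. j < k' \<Longrightarrow> x j = 0"
    using padic_leading_digit_ex[OF x] by blast
  have "real p powi (- k') < real p powi k"
    using abs padic_abs_eq[where x = x and k = k', OF k'] by simp
  have "- k' < k"
  proof (rule ccontr)
    assume "\<not> - k' < k"
    then have "real p powi k \<le> real p powi (- k')" using p by (intro power_int_increasing) simp_all
    with \<open>real p powi (- k') < real p powi k\<close> show False by simp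
  qed
  then show ?thesis using k'(2) j by simp
qed simp

lemma padic_chi_of_seq:
  assumes p: "prime p" and S: "padic_cauchy p S"
  shows "padic_chi p (padic_of_seq p S L) = e2pi (of_int (S L) / real p ^ L)"
proof -
  define z where "z = padic_of_seq p S L"
  have p1: "p > 1" using prime_gt_1_nat[OF p] .
  then have p0: "p > 0" by simp
  have z: "padic_num p z" unfolding z_def using p0 by (rule padic_num_of_seq)
  have "padic_chi p z = e2pi (of_int (digits_val p z L L) / real p ^ L)"
  proof (cases "padic_abs p z \<le> 1")
    case True
    then have "padic_abs p z < real p powi 1" using p1 by simp
    then have "z j = 0" if "j < 0" for j
      using padic_abs_less_imp_digit_eq_0[OF p1 z, of 1 j] that by simp
    then have "digits_val p z L L = 0" unfolding digits_val_def by (intro sum.neutral) auto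
    then show ?thesis using True unfolding padic_chi_def by (simp add: e2pi_def)
  next
    case False
    have "(\<Sum>j\<in>{j. j < 0 \<and> z j \<noteq> 0}. real (z j) * real p powi j)
        = of_int (digits_val p z L (nat (0 + int L))) / of_nat p ^ L"
      using p0 by (intro sum_digits_powi_eq_digits_val) (simp_all add: z_def padic_of_seq_below)
    then show ?thesis using False unfolding padic_chi_def e2pi_def by simp
  qed
  also have "\<dots> = e2pi (of_int (S L) / real p ^ L)"
    using e2pi_divide_cong[of "int p ^ L" "S L mod int p ^ L" "S L"] p0
    by (simp add: z_def digits_val_of_seq[OF p0 S] mod_eq_dvd_iff[symmetric])
  finally show ?thesis unfolding z_def .
qed

lemma padic_abs_of_seq_less_imp_dvd:
  assumes p: "prime p" and S: "padic_cauchy p S"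
    and abs: "padic_abs p (padic_of_seq p S L) < real p powi m" and k: "int k + m \<le> int L + 1"
  shows "int p ^ k dvd S k"
proof -
  have p1: "p > 1" using prime_gt_1_nat[OF p] .
  then have p0: "p > 0" by simp
  have "digits_val p (padic_of_seq p S L) L k = 0"
    unfolding digits_val_def
  proof (intro sum.neutral ballI)
    fix t assume "t \<in> {..<k}"
    then have "int t - int L \<le> - m" using k by simp
    then show "int (padic_of_seq p S L (int t - int L)) * int p ^ t = 0"
      using padic_abs_less_imp_digit_eq_0[OF p1 padic_num_of_seq[OF p0] abs] by simp
  qed
  then show ?thesis by (simp add: digits_val_of_seq[OF p0 S] dvd_eq_mod_eq_0)
qed


section \<open>Haar measure on \<open>\<int>\<^sub>p\<close>\<close>

lemma bij_betw_digits_val: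
  assumes p: "p > 0"
  shows "bij_betw (\<lambda>t. digits_val p t 0 L) (int ` {..<L} \<rightarrow>\<^sub>E {0..<p}) {0..<int p ^ L}"
proof -
  define J where "J = int ` {..<L}"
  define T where "T = J \<rightarrow>\<^sub>E {0..<p}"
  have "digits_val p t 0 L \<in> {0..<int p ^ L}" if "t \<in> T" for t
    using digits_val_bounds[of L t 0 p] that unfolding T_def J_def by (auto simp: PiE_iff)
  moreover have "X \<in> (\<lambda>t. digits_val p t 0 L) ` T" if X: "X \<in> {0..<int p ^ L}" for X
  proof
    define t where "t = restrict (\<lambda>j. nat ((X div int p ^ nat j) mod int p)) J"
    show "t \<in> T" unfolding t_def T_def using p by (auto simp: nat_less_iff)
    have "digits_val p t 0 L = (\<Sum>i<L. ((X div int p ^ i) mod int p) * int p ^ i)"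
      unfolding digits_val_def t_def J_def using p by (intro sum.cong) simp_all
    also have "\<dots> = X mod int p ^ L"
      using sum_digits_eq_mod[OF p padic_cauchy_const, of X L] by simp
    finally show "X = digits_val p t 0 L" using X by simp
  qed
  ultimately have "(\<lambda>t. digits_val p t 0 L) ` T = {0..<int p ^ L}" by blast
  moreover have "card T = card {0..<int p ^ L}"
    unfolding T_def J_def by (simp add: card_PiE card_image nat_power_eq)
  moreover have "finite T" unfolding T_def J_def by (simp add: finite_PiE)
  ultimately show ?thesis
    unfolding bij_betw_def T_def J_def by (metis eq_card_imp_inj_on)
qed

lemma space_padic_haar_Zp:
  "x \<in> space (padic_haar_Zp p) \<longleftrightarrow> (\<forall>j. x j \<in> (if j < 0 then {0} else {0..<p}))"
  unfolding padic_haar_Zp_def by (simp add: space_PiM PiE_iff space_uniform_count_measure)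

definition digit_cylinder :: "nat \<Rightarrow> int set \<Rightarrow> padic \<Rightarrow> padic set" where
  "digit_cylinder p J t = {x \<in> space (padic_haar_Zp p). \<forall>j\<in>J. x j = t j}"

lemma padic_haar_Zp_digit_cylinder:
  assumes p: "p > 0" and J: "finite J" "J \<subseteq> {0..}" and t: "t \<in> J \<rightarrow>\<^sub>E {0..<p}"
  shows "digit_cylinder p J t \<in> sets (padic_haar_Zp p)"
    and "measure (padic_haar_Zp p) (digit_cylinder p J t) = 1 / real p ^ card J"
proof -
  define M where "M j = uniform_count_measure (if j < 0 then {0::nat} else {0..<p})" for j :: int
  have haar: "padic_haar_Zp p = PiM UNIV M" unfolding padic_haar_Zp_def M_def ..
  interpret product_prob_space M UNIV
    using p by (intro product_prob_spaceI)
      (auto simp: M_def intro: prob_space_uniform_count_measure)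
  have sets_M: "{t j} \<in> sets (M j)" if "j \<in> J" for j
    using t that J(2) by (auto simp: M_def sets_uniform_count_measure PiE_iff)
  have C: "digit_cylinder p J t = prod_emb UNIV M J (PiE J (\<lambda>j. {t j}))"
    unfolding digit_cylinder_def haar by (auto simp: prod_emb_def PiE_iff space_PiM)
  show "digit_cylinder p J t \<in> sets (padic_haar_Zp p)"
    unfolding C haar using J sets_M by (intro sets_PiM_I) auto
  have "measure (padic_haar_Zp p) (digit_cylinder p J t) = (\<Prod>j\<in>J. measure (M j) {t j})"
    unfolding C haar using J sets_M by (intro measure_PiM_emb) auto
  also have "\<dots> = (\<Prod>j\<in>J. 1 / real p)"
    using t J(2) by (intro prod.cong) (auto simp: M_def measure_uniform_count_measure PiE_iff)
  finally show "measure (padic_haar_Zp p) (digit_cylinder p J t) = 1 / real p ^ card J"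
    by (simp add: power_one_over)
qed

lemma sum_indicator_digit_cylinder:
  fixes f :: "padic \<Rightarrow> 'b::real_vector"
  assumes x: "x \<in> space (padic_haar_Zp p)" and J: "finite J" "J \<subseteq> {0..}"
  shows "(\<Sum>t\<in>J \<rightarrow>\<^sub>E {0..<p}. indicator (digit_cylinder p J t) x *\<^sub>R f t) = f (restrict x J)"
proof -
  have "restrict x J \<in> J \<rightarrow>\<^sub>E {0..<p}" unfolding restrict_PiE_iff
  proof
    fix j assume "j \<in> J"
    then show "x j \<in> {0..<p}"
      using x J(2) unfolding space_padic_haar_Zp by (metis atLeast_iff not_less subsetD)
  qed
  moreover have "x \<in> digit_cylinder p J t \<longleftrightarrow> t = restrict x J" if "t \<in> J \<rightarrow>\<^sub>E {0..<p}" for t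
    using x that unfolding digit_cylinder_def by (auto simp: PiE_iff extensional_def)
  then have "(\<Sum>t\<in>J \<rightarrow>\<^sub>E {0..<p}. indicator (digit_cylinder p J t) x *\<^sub>R f t)
      = (\<Sum>t\<in>J \<rightarrow>\<^sub>E {0..<p}. if t = restrict x J then f t else 0)"
    by (intro sum.cong) (simp_all add: indicator_def)
  ultimately show ?thesis using J(1) by (simp add: sum.delta finite_PiE)
qed

lemma padic_haar_Zp_integral_digits:
  fixes G :: "int \<Rightarrow> 'b::{banach, second_countable_topology}"
  assumes p: "prime p"
  shows "has_bochner_integral (padic_haar_Zp p) (\<lambda>x. G (digits_val p x 0 L))
           ((1 / real p ^ L) *\<^sub>R (\<Sum>X\<in>{0..<int p ^ L}. G X))"
proof -
  have p0: "p > 0" using p prime_gt_0_nat by blast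
  define J where "J = int ` {..<L}"
  define T where "T = J \<rightarrow>\<^sub>E {0..<p}"
  define f where "f t = G (digits_val p t 0 L)" for t
  have J: "finite J" "J \<subseteq> {0..}" "card J = L" unfolding J_def by (auto simp: card_image)
  note C = padic_haar_Zp_digit_cylinder[OF p0 J(1,2), unfolded J(3), folded T_def]
  interpret prob_space "padic_haar_Zp p"
    unfolding padic_haar_Zp_def using p0
    by (intro prob_space_PiM prob_space_uniform_count_measure) auto
  have "has_bochner_integral (padic_haar_Zp p)
      (\<lambda>x. \<Sum>t\<in>T. indicator (digit_cylinder p J t) x *\<^sub>R f t)
      (\<Sum>t\<in>T. measure (padic_haar_Zp p) (digit_cylinder p J t) *\<^sub>R f t)"
    using C by (intro has_bochner_integral_sum has_bochner_integral_indicator)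
      (auto simp: emeasure_finite less_top[symmetric])
  moreover have "(\<Sum>t\<in>T. measure (padic_haar_Zp p) (digit_cylinder p J t) *\<^sub>R f t)
      = (1 / real p ^ L) *\<^sub>R (\<Sum>X\<in>{0..<int p ^ L}. G X)"
  proof -
    have "(\<Sum>t\<in>T. measure (padic_haar_Zp p) (digit_cylinder p J t) *\<^sub>R f t)
        = (\<Sum>t\<in>T. (1 / real p ^ L) *\<^sub>R f t)"
      using C(2) by simp
    also have "\<dots> = (1 / real p ^ L) *\<^sub>R (\<Sum>t\<in>T. f t)" by (rule scaleR_sum_right[symmetric])
    also have "(\<Sum>t\<in>T. f t) = (\<Sum>X\<in>{0..<int p ^ L}. G X)"
      using bij_betw_digits_val[OF p0, of L] unfolding f_def T_def J_def
      by (rule sum.reindex_bij_betw)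
    finally show ?thesis .
  qed
  moreover have "(\<Sum>t\<in>T. indicator (digit_cylinder p J t) x *\<^sub>R f t) = G (digits_val p x 0 L)"
    if "x \<in> space (padic_haar_Zp p)" for x
    using sum_indicator_digit_cylinder[OF that J(1,2), of f]
    unfolding T_def f_def digits_val_def J_def by simp
  then have "has_bochner_integral (padic_haar_Zp p)
      (\<lambda>x. \<Sum>t\<in>T. indicator (digit_cylinder p J t) x *\<^sub>R f t) I
    \<longleftrightarrow> has_bochner_integral (padic_haar_Zp p) (\<lambda>x. G (digits_val p x 0 L)) I" for I
    by (intro has_bochner_integral_cong) simp_all
  ultimately show ?thesis by simp
qed


section \<open>The integral\<close>

lemma padic_leading_digit_of_abs_gt:
  assumes p: "prime p" and x: "padic_num p x" and abs: "padic_abs p x > real p"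
  obtains m where "m \<ge> 2" and "x (- int m) \<noteq> 0" and "\<And>j. j < - int m \<Longrightarrow> x j = 0"
    and "padic_abs p x = real p powi int m"
proof -
  have "x \<noteq> (\<lambda>_. 0)" using abs unfolding padic_abs_def by auto
  then obtain k where k: "x k \<noteq> 0" "\<And>j. j < k \<Longrightarrow> x j = 0"
    using padic_leading_digit_ex[OF x] by blast
  have abs_k: "padic_abs p x = real p powi (- k)"
    by (rule padic_abs_eq[where x = x and k = k, OF k])
  have "- k \<ge> 2"
  proof (rule ccontr)
    assume "\<not> - k \<ge> 2"
    then have "real p powi (- k) \<le> real p powi 1"
      using prime_gt_0_nat[OF p] by (intro power_int_increasing) simp_all
    then show False using abs abs_k by simp
  qed
  then show ?thesis
    using that[of "nat (- k)"] k abs_k by simp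
qed

lemma dvd_of_int_mult_digits_val_of_padic_abs_less:
  assumes p: "prime p" and x: "\<And>j. j < - int L \<Longrightarrow> x j = 0"
    and abs: "padic_abs p (padic_mul p (padic_of_int p c) x) < real p powi m"
    and k: "int k + m \<le> int L + 1" "k \<le> L"
  shows "int p ^ k dvd c * digits_val p x L (L + L)"
proof -
  have p0: "p > 0" using p prime_gt_0_nat by blast
  define S where "S = (\<lambda>i. (c mod int p ^ i) * digits_val p x L (i + L))"
  have S: "padic_cauchy p S"
    unfolding S_def by (intro padic_cauchy_mult padic_cauchy_mod_power padic_cauchy_digits_val)
  have "digits_val p (padic_of_int p c) 0 i = c mod int p ^ i" for i
    using digits_val_of_seq[OF p0 padic_cauchy_const] by (simp add: padic_of_int_eq_of_seq[OF p])
  moreover have "\<And>j. j < - int 0 \<Longrightarrow> padic_of_int p c j = 0"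
    by (simp add: padic_of_int_eq_of_seq[OF p] padic_of_seq_below)
  ultimately have "padic_mul p (padic_of_int p c) x = padic_of_seq p S L"
    using padic_mul_eq_of_seq[where x = "padic_of_int p c" and Lx = 0 and y = x and Ly = L,
        OF p _ x]
    by (simp add: S_def)
  then have "int p ^ k dvd S k"
    using padic_abs_of_seq_less_imp_dvd[OF p S _ k(1)] abs by simp
  moreover have "int p ^ k dvd S L - S k" using padic_cauchyD[OF S k(2)] .
  moreover have "int p ^ k dvd c * digits_val p x L (L + L) - S L"
  proof -
    have "c * digits_val p x L (L + L) - S L = (c - c mod int p ^ L) * digits_val p x L (L + L)"
      unfolding S_def by (simp add: algebra_simps)
    also have "c - c mod int p ^ L = int p ^ L * (c div int p ^ L)" by (rule minus_mod_eq_mult_div)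
    finally have "c * digits_val p x L (L + L) - S L
        = int p ^ L * ((c div int p ^ L) * digits_val p x L (L + L))"
      by (simp only: mult.assoc)
    moreover have "int p ^ k dvd int p ^ L" using k(2) by (rule le_imp_power_dvd)
    ultimately show ?thesis by (metis dvd_mult2)
  qed
  ultimately show ?thesis
    by (metis dvd_add diff_add_cancel)
qed

lemma padic_chi_poly_on_haar_Zp:
  assumes p: "prime p" and a: "\<And>j t. j \<in> {1..n} \<Longrightarrow> t < - int L \<Longrightarrow> a j t = 0"
    and x: "x \<in> space (padic_haar_Zp p)"
  shows "padic_chi p (padic_poly p a n x)
    = e2pi (of_int (\<Sum>j=1..n. digits_val p (a j) L (L + L) * digits_val p x 0 L ^ j) / real p ^ L)"
proof -
  have "x t = 0" if "t < 0" for t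
    using x that unfolding space_padic_haar_Zp by (metis singletonD)
  then have "padic_poly p a n x
      = padic_of_seq p (\<lambda>i. \<Sum>j=1..n. digits_val p (a j) L (i + L) * digits_val p x 0 i ^ j) L"
    using padic_poly_eq_of_seq[where a = a and n = n and L = L and x = x, OF p a] by blast
  moreover have
    "padic_cauchy p (\<lambda>i. \<Sum>j=1..n. digits_val p (a j) L (i + L) * digits_val p x 0 i ^ j)"
    using padic_cauchy_digits_val[of p x 0]
    by (intro padic_cauchy_sum padic_cauchy_mult padic_cauchy_power padic_cauchy_digits_val) simp
  ultimately show ?thesis by (simp add: padic_chi_of_seq[OF p])
qed

lemma has_bochner_integral_padic_chi_poly:
  assumes p: "prime p" and a: "\<And>j t. j \<in> {1..n} \<Longrightarrow> t < - int L \<Longrightarrow> a j t = 0"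
  shows "has_bochner_integral (padic_haar_Zp p) (\<lambda>x. padic_chi p (padic_poly p a n x))
    ((1 / real p ^ L) *\<^sub>R
      (\<Sum>X\<in>{0..<int p ^ L}.
        e2pi (of_int (\<Sum>j=1..n. digits_val p (a j) L (L + L) * X ^ j) / real p ^ L)))"
proof -
  define G where "G X = e2pi (of_int (\<Sum>j=1..n. digits_val p (a j) L (L + L) * X ^ j) / real p ^ L)"
    for X
  have "G (digits_val p x 0 L) = padic_chi p (padic_poly p a n x)"
    if "x \<in> space (padic_haar_Zp p)" for x
    unfolding G_def using padic_chi_poly_on_haar_Zp[OF p a that] by simp
  then have "has_bochner_integral (padic_haar_Zp p) (\<lambda>x. G (digits_val p x 0 L)) I
      \<longleftrightarrow> has_bochner_integral (padic_haar_Zp p) (\<lambda>x. padic_chi p (padic_poly p a n x)) I" for I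
    by (intro has_bochner_integral_cong) simp_all
  then show ?thesis
    using padic_haar_Zp_integral_digits[OF p, where G = G and L = L] unfolding G_def by blast
qed

theorem mainTheorem6:
  fixes p n :: nat and a :: "nat \<Rightarrow> padic"
  assumes "prime p" and "n \<ge> 1"
    and "\<And>j. j \<in> {1..n} \<Longrightarrow> padic_num p (a j)"
    and "padic_abs p (a 1) > real p"
    and "\<And>j. j \<in> {2..n} \<Longrightarrow>
           padic_abs p (a 1) > padic_abs p (padic_mul p (padic_of_int p (int j)) (a j))"
  shows "has_bochner_integral (padic_haar_Zp p) (\<lambda>x. padic_chi p (padic_poly p a n x)) 0"
proof -
  note p = assms(1)
  have a1: "padic_num p (a 1)" using assms(2,3) by simp
  obtain m where m: "m \<ge> 2" and lead: "a 1 (- int m) \<noteq> 0" and below: "\<And>j. j < - int m \<Longrightarrow> a 1 j = 0"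
    and abs_a1: "padic_abs p (a 1) = real p powi int m"
    using padic_leading_digit_of_abs_gt[OF p a1 assms(4)] by blast
  obtain L where "m \<le> L" and low: "\<And>j t. j \<in> {1..n} \<Longrightarrow> t < - int L \<Longrightarrow> a j t = 0"
    using padic_nums_digits_bounded_below[of "{1..n}" p a m, OF finite_atLeastAtMost assms(3)]
    by blast
  define w where "w = L - m"
  define A where "A j = digits_val p (a j) L (L + L)" for j
  have L: "L = w + m" unfolding w_def using \<open>m \<le> L\<close> by simp
  have "\<exists>u. A 1 = int p ^ w * u \<and> \<not> int p dvd u"
    unfolding A_def using a1 lead below L m
    by (intro digits_val_leading_digit[where k = "- int m"]) (simp_all add: padic_num_def)
  then obtain u where A1: "A 1 = int p ^ w * u" and u: "\<not> int p dvd u" by blast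
  have dvd: "int p ^ (w + 1) dvd int j * A j" if j: "j \<in> {2..n}" for j
  proof -
    have "padic_abs p (padic_mul p (padic_of_int p (int j)) (a j)) < real p powi int m"
      using assms(5)[OF j] abs_a1 by simp
    moreover have "\<And>t. t < - int L \<Longrightarrow> a j t = 0" using low j by simp
    ultimately show ?thesis
      unfolding A_def using L m
      by (intro dvd_of_int_mult_digits_val_of_padic_abs_less[OF p, where m = "int m"]) simp_all
  qed
  have "(\<Sum>X\<in>{0..<int p ^ L}. e2pi (of_int (\<Sum>j=1..n. A j * X ^ j) / real p ^ L)) = 0"
    unfolding L by (rule exp_sum_poly_eq_0[OF p m assms(2) A1 u dvd])
  then show ?thesis
    using has_bochner_integral_padic_chi_poly[where a = a and n = n and L = L, OF p low]
    unfolding A_def by simp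
qed

end
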